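(* There is an absolute constant $C$ such that the following holds. Let $\delta\in(0,1/2)$ and let $\boldsymbol\theta_1,\boldsymbol\theta_2\in\mathbb R^d$ satisfy $\|\boldsymbol\theta_1-\boldsymbol\theta_2\|_2^2\ge C\sigma^2\log\delta^{-1}$. Let $\hat{\boldsymbol\theta}_1,\hat{\boldsymbol\theta}_2\in\mathbb R^d$ satisfy $\|\hat{\boldsymbol\theta}_b-\boldsymbol\theta_b\|_2\le\sigma$ for $b\in\{1,2\}$, and let $\hat{\mathbf c}=(\hat{\boldsymbol\theta}_1+\hat{\boldsymbol\theta}_2)/2$. Then if $\mathbf x\sim\mathcal N(\boldsymbol\theta_1,\sigma^2\mathbf I_d)$, with probability at least $1-\delta$ we have $(\mathbf x-\hat{\mathbf c})\cdot(\hat{\boldsymbol\theta}_1-\hat{\mathbf c})>0$; and if $\mathbf x\sim\mathcal N(\boldsymbol\theta_2,\sigma^2\mathbf I_d)$, with probability at least $1-\delta$ we have $(\mathbf x-\hat{\mathbf c})\cdot(\hat{\boldsymbol\theta}_1-\hat{\mathbf c})<0$. *)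

theory Defs
  imports "HOL-Probability.Probability"
begin

text \<open>Vectors in R^d are represented as functions nat => real, of which only the
coordinates i < d matter.\<close>

definition vinner :: "nat \<Rightarrow> (nat \<Rightarrow> real) \<Rightarrow> (nat \<Rightarrow> real) \<Rightarrow> real" where
  "vinner d x y = (\<Sum>i<d. x i * y i)"

definition vnorm :: "nat \<Rightarrow> (nat \<Rightarrow> real) \<Rightarrow> real" where
  "vnorm d x = sqrt (vinner d x x)"

definition gauss_vec :: "nat \<Rightarrow> (nat \<Rightarrow> real) \<Rightarrow> real \<Rightarrow> (nat \<Rightarrow> real) measure" where
  "gauss_vec d mu \<sigma> = PiM {..<d} (\<lambda>i. density lborel (normal_density (mu i) \<sigma>))"

end

theory Submission
  imports Defs
begin

text \<open>Write \<open>w = h\<^sub>1 - h\<^sub>2\<close>. For \<open>x \<sim> N(\<theta>, \<sigma>\<^sup>2 I)\<close> the decision statistic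
  \<open>(x - c) \<bullet> (h\<^sub>1 - c) = (x - c) \<bullet> w / 2\<close> is affine in the Gaussian vector, so its deviation
  \<open>(x - \<theta>) \<bullet> w\<close> from the mean has moment generating function \<open>exp (s\<^sup>2 \<sigma>\<^sup>2 |w|\<^sup>2 / 2)\<close> and
  obeys the Chernoff bound \<open>exp (-a\<^sup>2 / (2 \<sigma>\<^sup>2 |w|\<^sup>2))\<close>. Since \<open>h\<^sub>1\<close> is within \<open>\<sigma>\<close> of \<open>\<theta>\<^sub>1\<close>,
  the mean of \<open>(x - c) \<bullet> w\<close> is at least \<open>|w| (|w|/2 - \<sigma>)\<close> by Cauchy-Schwarz, so the
  misclassification probability is at most \<open>exp (-(|w|/2 - \<sigma>)\<^sup>2 / (2 \<sigma>\<^sup>2))\<close>. Finally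
  \<open>|w| \<ge> |\<theta>\<^sub>1 - \<theta>\<^sub>2| - 2 \<sigma>\<close>, and with \<open>C = 200\<close> the separation forces \<open>|w|/2 - \<sigma> \<ge> |\<theta>\<^sub>1 - \<theta>\<^sub>2|/10\<close>,
  which makes this bound at most \<open>\<delta>\<close>.\<close>

lemma vnorm_eq_L2_set: "vnorm d x = L2_set x {..<d}"
  by (simp add: vnorm_def vinner_def L2_set_def power2_eq_square)

lemma vnorm_nonneg: "0 \<le> vnorm d x"
  by (simp add: vnorm_eq_L2_set)

lemma vinner_self_eq_vnorm_square: "vinner d x x = (vnorm d x)\<^sup>2"
  by (simp add: vnorm_def vinner_def sum_nonneg)

lemma vinner_le_vnorm_mult: "vinner d x y \<le> vnorm d x * vnorm d y"
proof -
  have "vinner d x y \<le> (\<Sum>i<d. \<bar>x i\<bar> * \<bar>y i\<bar>)"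
    unfolding vinner_def by (intro sum_mono) (simp add: abs_mult[symmetric])
  also have "\<dots> \<le> vnorm d x * vnorm d y"
    unfolding vnorm_eq_L2_set by (rule L2_set_mult_ineq)
  finally show ?thesis .
qed

lemma vnorm_diff_commute: "vnorm d (\<lambda>i. x i - y i) = vnorm d (\<lambda>i. y i - x i)"
  by (simp add: vnorm_def vinner_def mult.commute[of "x _ - y _"] algebra_simps)

lemma vnorm_diff_triangle:
  "vnorm d (\<lambda>i. x i - z i) \<le> vnorm d (\<lambda>i. x i - y i) + vnorm d (\<lambda>i. y i - z i)"
  unfolding vnorm_eq_L2_set
  using L2_set_triangle_ineq[of "\<lambda>i. x i - y i" "\<lambda>i. y i - z i" "{..<d}"] by simp

lemma prob_space_gauss_vec: "0 < \<sigma> \<Longrightarrow> prob_space (gauss_vec d \<mu> \<sigma>)"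
  unfolding gauss_vec_def by (intro prob_space_PiM prob_space_normal_density)

lemma borel_measurable_vinner_gauss_vec [measurable]:
  "(\<lambda>x. vinner d w (\<lambda>i. x i - \<mu> i)) \<in> borel_measurable (gauss_vec d m \<sigma>)"
  unfolding gauss_vec_def vinner_def by measurable

lemma nn_integral_exp_normal_density:
  assumes "0 < \<sigma>"
  shows "(\<integral>\<^sup>+x. ennreal (exp (s * (x - \<mu>))) \<partial>density lborel (normal_density \<mu> \<sigma>))
    = ennreal (exp (s\<^sup>2 * \<sigma>\<^sup>2 / 2))"
proof -
  \<comment> \<open>completing the square shifts the mean to \<open>\<mu> + s \<sigma>\<^sup>2\<close>\<close>
  have tilt: "normal_density \<mu> \<sigma> x * exp (s * (x - \<mu>))
      = exp (s\<^sup>2 * \<sigma>\<^sup>2 / 2) * normal_density (\<mu> + s * \<sigma>\<^sup>2) \<sigma> x" for x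
  proof -
    have "-(x - \<mu>)\<^sup>2 / (2 * \<sigma>\<^sup>2) + s * (x - \<mu>)
        = s\<^sup>2 * \<sigma>\<^sup>2 / 2 + -(x - (\<mu> + s * \<sigma>\<^sup>2))\<^sup>2 / (2 * \<sigma>\<^sup>2)"
      using assms by (simp add: field_simps power2_eq_square)
    then show ?thesis
      unfolding normal_density_def by (simp add: exp_add[symmetric] mult_ac)
  qed
  have total_mass: "(\<integral>\<^sup>+x. ennreal (normal_density m \<sigma> x) \<partial>lborel) = 1" for m
    using prob_space.emeasure_space_1[OF prob_space_normal_density[OF assms, of m]]
    by (simp add: emeasure_density)
  have "(\<integral>\<^sup>+x. ennreal (exp (s * (x - \<mu>))) \<partial>density lborel (normal_density \<mu> \<sigma>))
      = (\<integral>\<^sup>+x. ennreal (exp (s\<^sup>2 * \<sigma>\<^sup>2 / 2)) * ennreal (normal_density (\<mu> + s * \<sigma>\<^sup>2) \<sigma> x) \<partial>lborel)"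
    by (simp add: nn_integral_density tilt flip: ennreal_mult)
  also have "\<dots> = ennreal (exp (s\<^sup>2 * \<sigma>\<^sup>2 / 2))"
    by (simp add: nn_integral_cmult total_mass)
  finally show ?thesis .
qed

lemma nn_integral_exp_vinner_gauss_vec:
  assumes "0 < \<sigma>"
  shows "(\<integral>\<^sup>+x. ennreal (exp (s * vinner d w (\<lambda>i. x i - \<mu> i))) \<partial>gauss_vec d \<mu> \<sigma>)
    = ennreal (exp (s\<^sup>2 * \<sigma>\<^sup>2 * (vnorm d w)\<^sup>2 / 2))"
proof -
  interpret product_sigma_finite "\<lambda>i. density lborel (normal_density (\<mu> i) \<sigma>)"
    unfolding product_sigma_finite_def
    using prob_space_normal_density[OF assms] prob_space_imp_sigma_finite by blast
  have "(\<integral>\<^sup>+x. ennreal (exp (s * vinner d w (\<lambda>i. x i - \<mu> i))) \<partial>gauss_vec d \<mu> \<sigma>)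
      = (\<integral>\<^sup>+x. (\<Prod>i<d. ennreal (exp ((s * w i) * (x i - \<mu> i)))) \<partial>gauss_vec d \<mu> \<sigma>)"
    unfolding vinner_def
    by (intro nn_integral_cong) (simp add: sum_distrib_left exp_sum prod_ennreal mult.assoc)
  also have "\<dots> = (\<Prod>i<d. ennreal (exp ((s * w i)\<^sup>2 * \<sigma>\<^sup>2 / 2)))"
    unfolding gauss_vec_def
    by (subst product_nn_integral_prod) (auto simp: nn_integral_exp_normal_density[OF assms])
  also have "\<dots> = ennreal (exp (\<Sum>i<d. s\<^sup>2 * \<sigma>\<^sup>2 / 2 * (w i * w i)))"
    by (simp add: exp_sum prod_ennreal power_mult_distrib power2_eq_square mult_ac)
  also have "(\<Sum>i<d. s\<^sup>2 * \<sigma>\<^sup>2 / 2 * (w i * w i)) = s\<^sup>2 * \<sigma>\<^sup>2 / 2 * vinner d w w"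
    by (simp add: vinner_def sum_distrib_left)
  also have "\<dots> = s\<^sup>2 * \<sigma>\<^sup>2 * (vnorm d w)\<^sup>2 / 2"
    by (simp add: vinner_self_eq_vnorm_square)
  finally show ?thesis .
qed

lemma gauss_vec_vinner_tail:
  assumes "0 < \<sigma>" and "0 < a" and "0 < vnorm d w"
  shows "measure (gauss_vec d \<mu> \<sigma>) {x \<in> space (gauss_vec d \<mu> \<sigma>). a \<le> vinner d w (\<lambda>i. x i - \<mu> i)}
    \<le> exp (- a\<^sup>2 / (2 * \<sigma>\<^sup>2 * (vnorm d w)\<^sup>2))"
proof -
  let ?M = "gauss_vec d \<mu> \<sigma>"
  interpret prob_space ?M
    using prob_space_gauss_vec[OF assms(1)] .
  \<comment> \<open>the minimiser of the Chernoff exponent \<open>s\<^sup>2 \<sigma>\<^sup>2 |w|\<^sup>2 / 2 - s a\<close>\<close>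
  define s where "s = a / (\<sigma>\<^sup>2 * (vnorm d w)\<^sup>2)"
  have "0 < s"
    using assms by (simp add: s_def)
  have "emeasure ?M {x \<in> space ?M. a \<le> vinner d w (\<lambda>i. x i - \<mu> i)}
      \<le> ennreal (exp (- s * a)) *
        (\<integral>\<^sup>+x. ennreal (exp (s * vinner d w (\<lambda>i. x i - \<mu> i))) * indicator (space ?M) x \<partial>?M)"
    using \<open>0 < s\<close> by (intro Chernoff_ineq_nn_integral_ge) auto
  also have "\<dots> = ennreal (exp (- s * a)) * ennreal (exp (s\<^sup>2 * \<sigma>\<^sup>2 * (vnorm d w)\<^sup>2 / 2))"
    by (simp add: nn_integral_exp_vinner_gauss_vec[OF assms(1)] flip: nn_integral_cong)
  also have "\<dots> = ennreal (exp (- a\<^sup>2 / (2 * \<sigma>\<^sup>2 * (vnorm d w)\<^sup>2)))"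
    using assms
    by (simp add: s_def mult_exp_exp power2_eq_square field_simps flip: ennreal_mult)
  finally show ?thesis
    by (simp add: emeasure_eq_measure)
qed

lemma vinner_bisector_eq:
  "2 * vinner d (\<lambda>i. x i - (h i + h' i) / 2) (\<lambda>i. h i - (h i + h' i) / 2)
    = (vnorm d (\<lambda>i. h i - h' i))\<^sup>2 / 2 - vinner d (\<lambda>i. h i - \<mu> i) (\<lambda>i. h i - h' i)
      - vinner d (\<lambda>i. h' i - h i) (\<lambda>i. x i - \<mu> i)"
  unfolding vinner_self_eq_vnorm_square[symmetric] vinner_def
    sum_subtractf[symmetric] sum_divide_distrib sum_distrib_left
  by (intro sum.cong) (simp_all add: field_simps)

lemma vinner_bisector_swap:
  "vinner d u (\<lambda>i. h i - (h i + h' i) / 2) = - vinner d u (\<lambda>i. h' i - (h i + h' i) / 2)"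
  unfolding vinner_def sum_negf[symmetric] by (intro sum.cong) (simp_all add: field_simps)

lemma gauss_vec_bisector_side:
  assumes "0 < \<sigma>" and near: "vnorm d (\<lambda>i. h i - \<mu> i) \<le> \<sigma>"
    and far: "2 * \<sigma> < vnorm d (\<lambda>i. h i - h' i)"
  defines "c \<equiv> \<lambda>i. (h i + h' i) / 2"
  shows "1 - exp (- (vnorm d (\<lambda>i. h i - h' i) / 2 - \<sigma>)\<^sup>2 / (2 * \<sigma>\<^sup>2))
    \<le> measure (gauss_vec d \<mu> \<sigma>) {x \<in> space (gauss_vec d \<mu> \<sigma>). 0 < vinner d (\<lambda>i. x i - c i) (\<lambda>i. h i - c i)}"
proof -
  let ?M = "gauss_vec d \<mu> \<sigma>"
  let ?correct = "\<lambda>x. 0 < vinner d (\<lambda>i. x i - c i) (\<lambda>i. h i - c i)"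
  let ?deviation = "\<lambda>x. vinner d (\<lambda>i. h' i - h i) (\<lambda>i. x i - \<mu> i)"
  interpret prob_space ?M
    using prob_space_gauss_vec[OF assms(1)] .
  define W where "W = vnorm d (\<lambda>i. h i - h' i)"
  define K where "K = W * (W / 2 - \<sigma>)"
  have "0 < K"
    using far assms(1) by (simp add: K_def W_def)
  have "vinner d (\<lambda>i. h i - \<mu> i) (\<lambda>i. h i - h' i) \<le> \<sigma> * W"
    using vinner_le_vnorm_mult[of d "\<lambda>i. h i - \<mu> i"] near vnorm_nonneg[of d "\<lambda>i. h i - h' i"]
    by (auto simp: W_def intro: order_trans mult_right_mono)
  then have "K \<le> 2 * vinner d (\<lambda>i. x i - c i) (\<lambda>i. h i - c i) + ?deviation x" for x
    unfolding c_def vinner_bisector_eq[of d x h h' \<mu>]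
    by (simp add: K_def W_def power2_eq_square algebra_simps)
  then have misclassified: "{x \<in> space ?M. \<not> ?correct x} \<subseteq> {x \<in> space ?M. K \<le> ?deviation x}"
    by (smt (verit) Collect_mono)
  have "measure ?M {x \<in> space ?M. K \<le> ?deviation x} \<le> exp (- K\<^sup>2 / (2 * \<sigma>\<^sup>2 * W\<^sup>2))"
    using gauss_vec_vinner_tail[OF assms(1) \<open>0 < K\<close>, of d "\<lambda>i. h' i - h i" \<mu>] far assms(1)
    by (simp add: W_def vnorm_diff_commute[of d h'])
  also have "\<dots> = exp (- (W / 2 - \<sigma>)\<^sup>2 / (2 * \<sigma>\<^sup>2))"
    using far assms(1) by (simp add: K_def W_def power_mult_distrib)
  finally have "prob {x \<in> space ?M. \<not> ?correct x} \<le> exp (- (W / 2 - \<sigma>)\<^sup>2 / (2 * \<sigma>\<^sup>2))"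
    using finite_measure_mono[OF misclassified] by (simp add: order_trans)
  moreover have "{x \<in> space ?M. ?correct x} \<in> events"
    unfolding vinner_def gauss_vec_def by measurable
  ultimately show ?thesis
    using prob_neg[of ?correct] by (simp add: W_def)
qed

lemma separation_margin:
  fixes \<sigma> L D W :: real
  assumes "0 < \<sigma>" and "2/3 \<le> L" and "0 \<le> D" and separation: "200 * \<sigma>\<^sup>2 * L \<le> D\<^sup>2"
    and "D - 2 * \<sigma> \<le> W"
  shows "2 * \<sigma> < W" and "L \<le> (W / 2 - \<sigma>)\<^sup>2 / (2 * \<sigma>\<^sup>2)"
proof -
  have "200 * \<sigma>\<^sup>2 * (2/3) \<le> 200 * \<sigma>\<^sup>2 * L"
    using \<open>2/3 \<le> L\<close> by (intro mult_left_mono) auto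
  moreover have "(11 * \<sigma>)\<^sup>2 = 121 * \<sigma>\<^sup>2"
    by (simp add: power_mult_distrib)
  ultimately have "(11 * \<sigma>)\<^sup>2 \<le> D\<^sup>2"
    using separation zero_le_power2[of \<sigma>] by linarith
  then have "11 * \<sigma> \<le> D"
    using \<open>0 \<le> D\<close> by (rule power2_le_imp_le)
  then show "2 * \<sigma> < W"
    using assms by linarith
  have "(D / 10)\<^sup>2 \<le> (W / 2 - \<sigma>)\<^sup>2"
    using \<open>11 * \<sigma> \<le> D\<close> assms by (intro power_mono) auto
  then have "2 * \<sigma>\<^sup>2 * L \<le> (W / 2 - \<sigma>)\<^sup>2"
    using separation by (simp add: power_divide)
  then show "L \<le> (W / 2 - \<sigma>)\<^sup>2 / (2 * \<sigma>\<^sup>2)"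
    using \<open>0 < \<sigma>\<close> by (simp add: pos_le_divide_eq mult_ac)
qed

lemma gauss_vec_bisector_classification:
  assumes "0 < \<sigma>" and "0 < \<delta>" and "\<delta> < 1/2"
    and separation: "200 * \<sigma>\<^sup>2 * ln (1 / \<delta>) \<le> (vnorm d (\<lambda>i. \<theta>1 i - \<theta>2 i))\<^sup>2"
    and near1: "vnorm d (\<lambda>i. h1 i - \<theta>1 i) \<le> \<sigma>" and near2: "vnorm d (\<lambda>i. h2 i - \<theta>2 i) \<le> \<sigma>"
  defines "c \<equiv> \<lambda>i. (h1 i + h2 i) / 2"
  shows "1 - \<delta> \<le> measure (gauss_vec d \<theta>1 \<sigma>)
      {x \<in> space (gauss_vec d \<theta>1 \<sigma>). 0 < vinner d (\<lambda>i. x i - c i) (\<lambda>i. h1 i - c i)}"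
    and "1 - \<delta> \<le> measure (gauss_vec d \<theta>2 \<sigma>)
      {x \<in> space (gauss_vec d \<theta>2 \<sigma>). vinner d (\<lambda>i. x i - c i) (\<lambda>i. h1 i - c i) < 0}"
proof -
  define W where "W = vnorm d (\<lambda>i. h1 i - h2 i)"
  have "ln 2 \<le> ln (1 / \<delta>)"
    using \<open>0 < \<delta>\<close> \<open>\<delta> < 1/2\<close> by (simp add: field_simps)
  then have "2/3 \<le> ln (1 / \<delta>)"
    using ln2_ge_two_thirds by linarith
  have "vnorm d (\<lambda>i. \<theta>1 i - \<theta>2 i) \<le> vnorm d (\<lambda>i. \<theta>1 i - h1 i) + W + vnorm d (\<lambda>i. h2 i - \<theta>2 i)"
    using vnorm_diff_triangle[of d \<theta>1 \<theta>2 h1] vnorm_diff_triangle[of d h1 \<theta>2 h2] by (simp add: W_def)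
  then have "vnorm d (\<lambda>i. \<theta>1 i - \<theta>2 i) - 2 * \<sigma> \<le> W"
    using near1 near2 vnorm_diff_commute[of d h1 \<theta>1] by linarith
  from separation_margin[OF \<open>0 < \<sigma>\<close> \<open>2/3 \<le> ln (1 / \<delta>)\<close> vnorm_nonneg separation this]
  have far: "2 * \<sigma> < W" and "ln (1 / \<delta>) \<le> (W / 2 - \<sigma>)\<^sup>2 / (2 * \<sigma>\<^sup>2)" .
  then have error: "exp (- (W / 2 - \<sigma>)\<^sup>2 / (2 * \<sigma>\<^sup>2)) \<le> \<delta>"
    using \<open>0 < \<delta>\<close> by (simp add: ln_div ln_ge_iff[symmetric])
  show "1 - \<delta> \<le> measure (gauss_vec d \<theta>1 \<sigma>)
      {x \<in> space (gauss_vec d \<theta>1 \<sigma>). 0 < vinner d (\<lambda>i. x i - c i) (\<lambda>i. h1 i - c i)}"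
    using gauss_vec_bisector_side[OF \<open>0 < \<sigma>\<close> near1 far[unfolded W_def]] error
    unfolding c_def W_def by linarith
  have far': "2 * \<sigma> < vnorm d (\<lambda>i. h2 i - h1 i)" and W': "vnorm d (\<lambda>i. h2 i - h1 i) = W"
    using far vnorm_diff_commute[of d h1 h2] by (simp_all add: W_def)
  have opposite: "vinner d (\<lambda>i. x i - c i) (\<lambda>i. h1 i - c i) < 0
      \<longleftrightarrow> 0 < vinner d (\<lambda>i. x i - (h2 i + h1 i) / 2) (\<lambda>i. h2 i - (h2 i + h1 i) / 2)" for x
    using vinner_bisector_swap[of d "\<lambda>i. x i - c i" h1 h2] by (simp add: c_def add.commute)
  show "1 - \<delta> \<le> measure (gauss_vec d \<theta>2 \<sigma>)
      {x \<in> space (gauss_vec d \<theta>2 \<sigma>). vinner d (\<lambda>i. x i - c i) (\<lambda>i. h1 i - c i) < 0}"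
    using gauss_vec_bisector_side[OF \<open>0 < \<sigma>\<close> near2 far'] error unfolding opposite W' by linarith
qed

theorem mainTheorem16:
  shows "\<exists>C::real. \<forall>(d::nat) (\<sigma>::real) (\<delta>::real) (\<theta>1::nat\<Rightarrow>real) \<theta>2 h1 h2.
    0 < \<sigma> \<longrightarrow> 0 < \<delta> \<longrightarrow> \<delta> < 1/2 \<longrightarrow>
    (vnorm d (\<lambda>i. \<theta>1 i - \<theta>2 i))\<^sup>2 \<ge> C * \<sigma>\<^sup>2 * ln (1 / \<delta>) \<longrightarrow>
    vnorm d (\<lambda>i. h1 i - \<theta>1 i) \<le> \<sigma> \<longrightarrow>
    vnorm d (\<lambda>i. h2 i - \<theta>2 i) \<le> \<sigma> \<longrightarrow>
    (let c = (\<lambda>i. (h1 i + h2 i) / 2) in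
      measure (gauss_vec d \<theta>1 \<sigma>)
        {x \<in> space (gauss_vec d \<theta>1 \<sigma>). vinner d (\<lambda>i. x i - c i) (\<lambda>i. h1 i - c i) > 0}
        \<ge> 1 - \<delta> \<and>
      measure (gauss_vec d \<theta>2 \<sigma>)
        {x \<in> space (gauss_vec d \<theta>2 \<sigma>). vinner d (\<lambda>i. x i - c i) (\<lambda>i. h1 i - c i) < 0}
        \<ge> 1 - \<delta>)"
  by (intro exI[of _ 200] allI impI) (simp add: Let_def gauss_vec_bisector_classification)

end
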